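(* Let $m\in\{1,2\}$, $K>0$, $\gamma=3$, and let $(\rho,u)$ be a smooth solution ($\rho>0$, $r>0$) of the radially symmetric isentropic Euler equations $$(r^m\rho)_t+(r^m\rho u)_r=0,\qquad (r^m\rho u)_t+(r^m\rho u^2)_r+r^m p_r=0,\qquad p=K\rho^\gamma,$$ in the supersonic expanding regime $0<c_1<c_2$. Then: (i) If the 1-wave is rarefaction (R), the 2-wave can only change from compression (C) to rarefaction (R); if the 2-wave is rarefaction, the 1-wave can only change from C to R. (ii) If the 1-wave is compression (C), the 2-wave can only change from R to C; if the 2-wave is compression, the 1-wave can only change from R to C.
   Context: Here $h=\sqrt{K\gamma}\,\rho^{(\gamma-1)/2}$, $c_1=u-h$, $c_2=u+h$, and the gradient variables are $$\alpha=u_r+\tfrac{2}{\gamma-1}h_r+\tfrac{m}{r}\tfrac{hu}{c_2},\qquad \beta=u_r-\tfrac{2}{\gamma-1}h_r-\tfrac{m}{r}\tfrac{hu}{c_1}.$$ The solution is called 1-rarefaction (1-compression) at a point if $\beta>0$ ($\beta<0$) there, and 2-rarefaction (2-compression) if $\alpha>0$ ($\alpha<0$). Characteristic flow maps: $\partial_t\xi(r_0,t)=c_1(\xi(r_0,t),t)$, $\partial_t\psi(r_0,t)=c_2(\psi(r_0,t),t)$, $\xi(r_0,0)=\psi(r_0,0)=r_0$. "The 2-wave changes from R to C" means: there are $r_0$, $t^*$ and $\varepsilon>0$ such that, writing $g(t)=\alpha(\psi(r_0,t),t)$, we have $g(t^* )=0$, $g>0$ on $(t^*-\varepsilon,t^*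 )$ and $g<0$ on $(t^*,t^*+\varepsilon)$ (change from C to R: the reverse signs); the statement "if the 1-wave is R then the 2-wave can only change from C to R" means no R-to-C change of the 2-wave occurs at a time $t^*$ with $\beta(\psi(r_0,t^* ),t^* )>0$. The analogous statements for the 1-wave use $\beta$ along $\xi(r_0,\cdot)$, and with the roles of R/C (signs) of the other wave exchanged accordingly. *)

theory Defs
  imports "HOL-Analysis.Analysis"
begin

text \<open>Functions of (r,t) are modelled as functions on real \<times> real.
  C^k regularity on a set, via continuous partial derivatives.\<close>

primrec Ck_on :: "nat \<Rightarrow> (real \<times> real) set \<Rightarrow> (real \<times> real \<Rightarrow> real) \<Rightarrow> bool" where
  "Ck_on 0 \<Omega> f = continuous_on \<Omega> f"
| "Ck_on (Suc k) \<Omega> f =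
     (\<exists>fr ft. (\<forall>z\<in>\<Omega>. (f has_derivative (\<lambda>(dr, dt). fr z * dr + ft z * dt)) (at z))
              \<and> Ck_on k \<Omega> fr \<and> Ck_on k \<Omega> ft)"

definition smooth_on2 :: "(real \<times> real) set \<Rightarrow> (real \<times> real \<Rightarrow> real) \<Rightarrow> bool" where
  "smooth_on2 \<Omega> f \<longleftrightarrow> (\<forall>k. Ck_on k \<Omega> f)"

definition pd_r :: "(real \<times> real \<Rightarrow> real) \<Rightarrow> real \<times> real \<Rightarrow> real" where
  "pd_r f z = deriv (\<lambda>s. f (s, snd z)) (fst z)"

definition pd_t :: "(real \<times> real \<Rightarrow> real) \<Rightarrow> real \<times> real \<Rightarrow> real" where
  "pd_t f z = deriv (\<lambda>s. f (fst z, s)) (snd z)"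

definition hsp :: "real \<Rightarrow> real \<Rightarrow> (real \<times> real \<Rightarrow> real) \<Rightarrow> real \<times> real \<Rightarrow> real" where
  "hsp K \<gamma> \<rho> z = sqrt (K * \<gamma>) * \<rho> z powr ((\<gamma> - 1) / 2)"

definition c1 :: "real \<Rightarrow> real \<Rightarrow> (real \<times> real \<Rightarrow> real) \<Rightarrow> (real \<times> real \<Rightarrow> real) \<Rightarrow> real \<times> real \<Rightarrow> real" where
  "c1 K \<gamma> \<rho> u z = u z - hsp K \<gamma> \<rho> z"

definition c2 :: "real \<Rightarrow> real \<Rightarrow> (real \<times> real \<Rightarrow> real) \<Rightarrow> (real \<times> real \<Rightarrow> real) \<Rightarrow> real \<times> real \<Rightarrow> real" where
  "c2 K \<gamma> \<rho> u z = u z + hsp K \<gamma> \<rho> z"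

definition alpha :: "real \<Rightarrow> real \<Rightarrow> real \<Rightarrow> (real \<times> real \<Rightarrow> real) \<Rightarrow> (real \<times> real \<Rightarrow> real) \<Rightarrow> real \<times> real \<Rightarrow> real" where
  "alpha m K \<gamma> \<rho> u z = pd_r u z + 2 / (\<gamma> - 1) * pd_r (hsp K \<gamma> \<rho>) z
      + m / fst z * (hsp K \<gamma> \<rho> z * u z / c2 K \<gamma> \<rho> u z)"

definition beta :: "real \<Rightarrow> real \<Rightarrow> real \<Rightarrow> (real \<times> real \<Rightarrow> real) \<Rightarrow> (real \<times> real \<Rightarrow> real) \<Rightarrow> real \<times> real \<Rightarrow> real" where
  "beta m K \<gamma> \<rho> u z = pd_r u z - 2 / (\<gamma> - 1) * pd_r (hsp K \<gamma> \<rho>) z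
      - m / fst z * (hsp K \<gamma> \<rho> z * u z / c1 K \<gamma> \<rho> u z)"

definition euler_solution ::
  "real \<Rightarrow> real \<Rightarrow> real \<Rightarrow> (real \<times> real) set \<Rightarrow> (real \<times> real \<Rightarrow> real) \<Rightarrow> (real \<times> real \<Rightarrow> real) \<Rightarrow> bool" where
  "euler_solution m K \<gamma> \<Omega> \<rho> u \<longleftrightarrow>
     open \<Omega> \<and> (\<forall>z\<in>\<Omega>. fst z > 0) \<and> smooth_on2 \<Omega> \<rho> \<and> smooth_on2 \<Omega> u \<and>
     (\<forall>z\<in>\<Omega>. \<rho> z > 0) \<and>
     (\<forall>z\<in>\<Omega>. pd_t (\<lambda>w. fst w powr m * \<rho> w) z + pd_r (\<lambda>w. fst w powr m * \<rho> w * u w) z = 0) \<and>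
     (\<forall>z\<in>\<Omega>. pd_t (\<lambda>w. fst w powr m * \<rho> w * u w) z
               + pd_r (\<lambda>w. fst w powr m * \<rho> w * (u w)\<^sup>2) z
               + fst z powr m * pd_r (\<lambda>w. K * \<rho> w powr \<gamma>) z = 0) \<and>
     (\<forall>z\<in>\<Omega>. 0 < c1 K \<gamma> \<rho> u z \<and> c1 K \<gamma> \<rho> u z < c2 K \<gamma> \<rho> u z)"

text \<open>The characteristic t \<mapsto> \<psi>(r0,t) (resp. \<xi>(r0,t)) on the time interval J (containing 0):
  an integral curve of the speed c staying in \<Omega> with initial value r0.\<close>
definition char_curve ::
  "(real \<times> real) set \<Rightarrow> (real \<times> real \<Rightarrow> real) \<Rightarrow> real set \<Rightarrow> real \<Rightarrow> (real \<Rightarrow> real) \<Rightarrow> bool" where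
  "char_curve \<Omega> c J r0 x \<longleftrightarrow> is_interval J \<and> 0 \<in> J \<and> x 0 = r0 \<and>
     (\<forall>t\<in>J. (x t, t) \<in> \<Omega> \<and> (x has_real_derivative c (x t, t)) (at t within J))"

definition changes_R_to_C :: "(real \<Rightarrow> real) \<Rightarrow> real \<Rightarrow> real \<Rightarrow> bool" where
  "changes_R_to_C g ts \<epsilon> \<longleftrightarrow> \<epsilon> > 0 \<and> g ts = 0 \<and>
     (\<forall>t\<in>{ts - \<epsilon><..<ts}. g t > 0) \<and> (\<forall>t\<in>{ts<..<ts + \<epsilon>}. g t < 0)"

definition changes_C_to_R :: "(real \<Rightarrow> real) \<Rightarrow> real \<Rightarrow> real \<Rightarrow> bool" where
  "changes_C_to_R g ts \<epsilon> \<longleftrightarrow> \<epsilon> > 0 \<and> g ts = 0 \<and>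
     (\<forall>t\<in>{ts - \<epsilon><..<ts}. g t < 0) \<and> (\<forall>t\<in>{ts<..<ts + \<epsilon>}. g t > 0)"

end

theory Submission
  imports Defs
begin

text \<open>For \<open>\<gamma> = 3\<close> the sound speed is linear in the density, \<open>h = c \<rho>\<close> with \<open>c = sqrt (3 K)\<close>,
  and \<open>\<alpha>\<close>, \<open>\<beta>\<close> arise from one expression by the symmetry \<open>c \<mapsto> -c\<close>, which also exchanges the
  two families of characteristics. Differentiating \<open>\<alpha>\<close> along a 2-characteristic and eliminating
  all time derivatives with the Euler equations (and the symmetry of mixed partials) shows that
  at a zero of \<open>\<alpha>\<close> its derivative along the characteristic is \<open>m (u - h)\<^sup>2 / (2 r (u + h)) \<beta>\<close>,
  a positive multiple of \<open>\<beta>\<close> in the supersonic expanding regime. So where \<open>\<beta> > 0\<close> the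
  function \<open>\<alpha>\<close> can only cross zero upwards, and where \<open>\<beta> < 0\<close> only downwards.\<close>

section \<open>Partial derivatives in the \<open>(r, t)\<close>-plane\<close>

definition has_partials :: "(real \<times> real \<Rightarrow> real) \<Rightarrow> real \<Rightarrow> real \<Rightarrow> real \<times> real \<Rightarrow> bool" where
  "has_partials f a b z \<longleftrightarrow> (f has_derivative (\<lambda>(dr, dt). a * dr + b * dt)) (at z)"

lemma has_partials_DERIV_r:
  assumes "has_partials f a b (r, t)"
  shows "((\<lambda>s. f (s, t)) has_real_derivative a) (at r)"
proof -
  have "((\<lambda>s. (s, t)) has_derivative (\<lambda>h. (h, 0))) (at r)"
    by (intro has_derivative_Pair) (auto intro: has_derivative_ident)
  from has_derivative_compose[OF this assms[unfolded has_partials_def]]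
  show ?thesis by (simp add: has_field_derivative_def)
qed

lemma has_partials_DERIV_t:
  assumes "has_partials f a b (r, t)"
  shows "((\<lambda>s. f (r, s)) has_real_derivative b) (at t)"
proof -
  have "((\<lambda>s. (r, s)) has_derivative (\<lambda>h. (0, h))) (at t)"
    by (intro has_derivative_Pair) (auto intro: has_derivative_ident)
  from has_derivative_compose[OF this assms[unfolded has_partials_def]]
  show ?thesis by (simp add: has_field_derivative_def)
qed

lemma has_partials_pd:
  assumes "has_partials f a b (r, t)"
  shows "pd_r f (r, t) = a" and "pd_t f (r, t) = b"
  using DERIV_imp_deriv[OF has_partials_DERIV_r[OF assms]]
    DERIV_imp_deriv[OF has_partials_DERIV_t[OF assms]]
  by (simp_all add: pd_r_def pd_t_def)

lemma has_partials_along_graph: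
  assumes "has_partials f a b (x t, t)" and "(x has_real_derivative p) (at t within J)"
  shows "((\<lambda>t. f (x t, t)) has_real_derivative a * p + b) (at t within J)"
proof -
  have "((\<lambda>t. (x t, t)) has_derivative (\<lambda>h. (p * h, h))) (at t within J)"
    using assms(2) unfolding has_field_derivative_def
    by (intro has_derivative_Pair) (auto intro: has_derivative_ident)
  from has_derivative_compose[OF this assms(1)[unfolded has_partials_def]]
  have "((\<lambda>t. f (x t, t)) has_derivative (\<lambda>h. a * (p * h) + b * h)) (at t within J)"
    by simp
  moreover have "(\<lambda>h. a * (p * h) + b * h) = (*) (a * p + b)"
    by (auto simp: fun_eq_iff algebra_simps)
  ultimately show ?thesis by (simp add: has_field_derivative_def)
qed

lemma pd_r_eq_on_slice:
  assumes "open \<Omega>" and "(r, t) \<in> \<Omega>" and "\<And>s. (s, t) \<in> \<Omega> \<Longrightarrow> f (s, t) = g s"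
    and "(g has_real_derivative D) (at r)"
  shows "pd_r f (r, t) = D"
proof -
  have "open ((\<lambda>s. (s, t)) -` \<Omega>)"
    by (rule continuous_open_vimage[OF assms(1)]) (intro continuous_intros)
  with assms have "((\<lambda>s. f (s, t)) has_real_derivative D) (at r)"
    by (intro has_field_derivative_transform_within_open[OF assms(4)]) auto
  then show ?thesis by (simp add: pd_r_def DERIV_imp_deriv)
qed

lemma Ck_on_cong:
  assumes "open \<Omega>" and "Ck_on k \<Omega> f" and "\<And>z. z \<in> \<Omega> \<Longrightarrow> f z = g z"
  shows "Ck_on k \<Omega> g"
proof (cases k)
  case 0
  then show ?thesis using assms(2,3) continuous_on_cong[of \<Omega> \<Omega> f g] by simp
next
  case (Suc k')
  then obtain fr ft where
    f: "\<And>z. z \<in> \<Omega> \<Longrightarrow> (f has_derivative (\<lambda>(dr, dt). fr z * dr + ft z * dt)) (at z)"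
    and "Ck_on k' \<Omega> fr" "Ck_on k' \<Omega> ft"
    using assms(2) by auto
  moreover have "(g has_derivative (\<lambda>(dr, dt). fr z * dr + ft z * dt)) (at z)" if "z \<in> \<Omega>" for z
    using has_derivative_transform_within_open[OF f[OF that] assms(1) that assms(3)] .
  ultimately show ?thesis unfolding Suc Ck_on.simps by blast
qed

lemma Ck_on_SucE:
  assumes "Ck_on (Suc k) \<Omega> f"
  obtains fr ft where "\<And>z. z \<in> \<Omega> \<Longrightarrow> has_partials f (fr z) (ft z) z"
    and "Ck_on k \<Omega> fr" and "Ck_on k \<Omega> ft"
  using assms unfolding has_partials_def by auto

lemma smooth_on2_has_partials:
  assumes "smooth_on2 \<Omega> f" and "(r, t) \<in> \<Omega>"
  shows "has_partials f (pd_r f (r, t)) (pd_t f (r, t)) (r, t)"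
proof -
  obtain fr ft where "\<And>z. z \<in> \<Omega> \<Longrightarrow> has_partials f (fr z) (ft z) z"
    using assms(1) Ck_on_SucE[of 0] unfolding smooth_on2_def by metis
  with assms(2) show ?thesis using has_partials_pd by metis
qed

lemma smooth_on2_DERIV_r:
  assumes "smooth_on2 \<Omega> f" and "(r, t) \<in> \<Omega>"
  shows "((\<lambda>s. f (s, t)) has_real_derivative pd_r f (r, t)) (at r)"
  using has_partials_DERIV_r[OF smooth_on2_has_partials[OF assms]] .

lemma smooth_on2_DERIV_t:
  assumes "smooth_on2 \<Omega> f" and "(r, t) \<in> \<Omega>"
  shows "((\<lambda>s. f (r, s)) has_real_derivative pd_t f (r, t)) (at t)"
  using has_partials_DERIV_t[OF smooth_on2_has_partials[OF assms]] .

lemma smooth_on2_pd: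
  assumes "smooth_on2 \<Omega> f" and "open \<Omega>"
  shows "smooth_on2 \<Omega> (pd_r f)" and "smooth_on2 \<Omega> (pd_t f)"
proof -
  have "Ck_on k \<Omega> (pd_r f) \<and> Ck_on k \<Omega> (pd_t f)" for k
  proof -
    obtain fr ft where fr_ft: "\<And>z. z \<in> \<Omega> \<Longrightarrow> has_partials f (fr z) (ft z) z"
      and "Ck_on k \<Omega> fr" "Ck_on k \<Omega> ft"
      using assms(1) Ck_on_SucE[of k] unfolding smooth_on2_def by metis
    moreover have "fr z = pd_r f z" "ft z = pd_t f z" if "z \<in> \<Omega>" for z
      using has_partials_pd fr_ft[OF that] by (metis surj_pair)+
    ultimately show ?thesis using Ck_on_cong[OF assms(2)] by metis
  qed
  then show "smooth_on2 \<Omega> (pd_r f)" "smooth_on2 \<Omega> (pd_t f)"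
    unfolding smooth_on2_def by auto
qed

lemma smooth_on2_isCont:
  assumes "smooth_on2 \<Omega> f" and "open \<Omega>" and "z \<in> \<Omega>"
  shows "isCont f z"
  using assms Ck_on.simps(1) continuous_on_eq_continuous_at unfolding smooth_on2_def by metis

lemma mixed_partials_eq:
  fixes f fr ft frt ftr :: "real \<times> real \<Rightarrow> real"
  assumes "open \<Omega>" and "(a, b) \<in> \<Omega>"
    and fr: "\<And>x y. (x, y) \<in> \<Omega> \<Longrightarrow> ((\<lambda>s. f (s, y)) has_real_derivative fr (x, y)) (at x)"
    and ft: "\<And>x y. (x, y) \<in> \<Omega> \<Longrightarrow> ((\<lambda>s. f (x, s)) has_real_derivative ft (x, y)) (at y)"
    and frt: "\<And>x y. (x, y) \<in> \<Omega> \<Longrightarrow> ((\<lambda>s. fr (x, s)) has_real_derivative frt (x, y)) (at y)"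
    and ftr: "\<And>x y. (x, y) \<in> \<Omega> \<Longrightarrow> ((\<lambda>s. ft (s, y)) has_real_derivative ftr (x, y)) (at x)"
    and "isCont frt (a, b)" and "isCont ftr (a, b)"
  shows "frt (a, b) = ftr (a, b)"
proof (rule ccontr)
  assume "frt (a, b) \<noteq> ftr (a, b)"
  define e where "e = \<bar>frt (a, b) - ftr (a, b)\<bar> / 2"
  have "e > 0" using \<open>frt (a, b) \<noteq> ftr (a, b)\<close> by (simp add: e_def)
  obtain d1 where "d1 > 0" and d1: "\<And>p. dist p (a, b) < d1 \<Longrightarrow> dist (frt p) (frt (a, b)) < e"
    using \<open>isCont frt (a, b)\<close> \<open>e > 0\<close> unfolding continuous_at_eps_delta by blast
  obtain d2 where "d2 > 0" and d2: "\<And>p. dist p (a, b) < d2 \<Longrightarrow> dist (ftr p) (ftr (a, b)) < e"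
    using \<open>isCont ftr (a, b)\<close> \<open>e > 0\<close> unfolding continuous_at_eps_delta by blast
  obtain d0 where "d0 > 0" and "ball (a, b) d0 \<subseteq> \<Omega>"
    using assms(1,2) open_contains_ball by blast
  define h where "h = min d0 (min d1 d2) / 3"
  have "h > 0" using \<open>d0 > 0\<close> \<open>d1 > 0\<close> \<open>d2 > 0\<close> by (simp add: h_def)
  have in_square: "(x, y) \<in> \<Omega> \<and> dist (x, y) (a, b) < d1 \<and> dist (x, y) (a, b) < d2"
    if "a \<le> x" "x \<le> a + h" "b \<le> y" "y \<le> b + h" for x y
  proof -
    have "dist (x, y) (a, b) \<le> \<bar>x - a\<bar> + \<bar>y - b\<bar>"
      using sqrt_sum_squares_le_sum_abs[of "x - a" "y - b"] by (simp add: dist_Pair_Pair dist_real_def)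
    also have "\<dots> < min d0 (min d1 d2)" using that \<open>h > 0\<close> by (auto simp: h_def)
    finally show ?thesis using \<open>ball (a, b) d0 \<subseteq> \<Omega>\<close> by (auto simp: dist_commute)
  qed
  have "a < a + h" "b < b + h" using \<open>h > 0\<close> by auto
  \<comment> \<open>the second difference of f over the square, computed in both orders by the mean value theorem\<close>
  obtain \<xi> where \<xi>: "a < \<xi>" "\<xi> < a + h"
    "(f (a + h, b + h) - f (a + h, b)) - (f (a, b + h) - f (a, b)) = h * (fr (\<xi>, b + h) - fr (\<xi>, b))"
    using MVT2[OF \<open>a < a + h\<close>, of "\<lambda>s. f (s, b + h) - f (s, b)"] in_square \<open>h > 0\<close>
    by (force intro: DERIV_diff fr)
  obtain \<eta> where \<eta>: "b < \<eta>" "\<eta> < b + h" "fr (\<xi>, b + h) - fr (\<xi>, b) = h * frt (\<xi>, \<eta>)"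
    using MVT2[OF \<open>b < b + h\<close>, of "\<lambda>s. fr (\<xi>, s)"] in_square \<xi> by (force intro: frt)
  obtain \<eta>' where \<eta>': "b < \<eta>'" "\<eta>' < b + h"
    "(f (a + h, b + h) - f (a, b + h)) - (f (a + h, b) - f (a, b)) = h * (ft (a + h, \<eta>') - ft (a, \<eta>'))"
    using MVT2[OF \<open>b < b + h\<close>, of "\<lambda>s. f (a + h, s) - f (a, s)"] in_square \<open>h > 0\<close>
    by (force intro: DERIV_diff ft)
  obtain \<xi>' where \<xi>': "a < \<xi>'" "\<xi>' < a + h" "ft (a + h, \<eta>') - ft (a, \<eta>') = h * ftr (\<xi>', \<eta>')"
    using MVT2[OF \<open>a < a + h\<close>, of "\<lambda>s. ft (s, \<eta>')"] in_square \<eta>' by (force intro: ftr)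
  have "h * (h * frt (\<xi>, \<eta>)) = h * (h * ftr (\<xi>', \<eta>'))"
    using \<xi>(3) \<eta>(3) \<eta>'(3) \<xi>'(3) by (simp add: algebra_simps)
  then have "frt (\<xi>, \<eta>) = ftr (\<xi>', \<eta>')" using \<open>h > 0\<close> by simp
  moreover have "dist (frt (\<xi>, \<eta>)) (frt (a, b)) < e" using d1 in_square \<xi> \<eta> by auto
  moreover have "dist (ftr (\<xi>', \<eta>')) (ftr (a, b)) < e" using d2 in_square \<xi>' \<eta>' by auto
  ultimately have "\<bar>frt (a, b) - ftr (a, b)\<bar> < 2 * e" by (simp add: dist_real_def)
  then show False by (simp add: e_def)
qed

lemma smooth_on2_pd_commute:
  assumes "smooth_on2 \<Omega> f" and "open \<Omega>" and "(r, t) \<in> \<Omega>"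
  shows "pd_t (pd_r f) (r, t) = pd_r (pd_t f) (r, t)"
proof (rule mixed_partials_eq[OF assms(2,3)])
  note fr = smooth_on2_pd(1)[OF assms(1,2)] and ft = smooth_on2_pd(2)[OF assms(1,2)]
  fix x y assume "(x, y) \<in> \<Omega>"
  then show "((\<lambda>s. f (s, y)) has_real_derivative pd_r f (x, y)) (at x)"
    and "((\<lambda>s. f (x, s)) has_real_derivative pd_t f (x, y)) (at y)"
    and "((\<lambda>s. pd_r f (x, s)) has_real_derivative pd_t (pd_r f) (x, y)) (at y)"
    and "((\<lambda>s. pd_t f (s, y)) has_real_derivative pd_r (pd_t f) (x, y)) (at x)"
    using smooth_on2_DERIV_r smooth_on2_DERIV_t assms(1) fr ft by blast+
next
  show "isCont (pd_t (pd_r f)) (r, t)" and "isCont (pd_r (pd_t f)) (r, t)"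
    using smooth_on2_isCont smooth_on2_pd assms by blast+
qed

section \<open>The Euler equations in nonconservative form\<close>

lemma euler_mass_nonconservative:
  assumes "euler_solution m K \<gamma> \<Omega> \<rho> u" and "(r, t) \<in> \<Omega>"
  shows "pd_t \<rho> (r, t) + u (r, t) * pd_r \<rho> (r, t) + \<rho> (r, t) * pd_r u (r, t)
           + m * \<rho> (r, t) * u (r, t) / r = 0"
proof -
  have "r > 0" and "smooth_on2 \<Omega> \<rho>" and "smooth_on2 \<Omega> u"
    and mass: "pd_t (\<lambda>w. fst w powr m * \<rho> w) (r, t) + pd_r (\<lambda>w. fst w powr m * \<rho> w * u w) (r, t) = 0"
    using assms unfolding euler_solution_def by force+
  note \<rho>_r = smooth_on2_DERIV_r[OF \<open>smooth_on2 \<Omega> \<rho>\<close> assms(2)]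
    and \<rho>_t = smooth_on2_DERIV_t[OF \<open>smooth_on2 \<Omega> \<rho>\<close> assms(2)]
    and u_r = smooth_on2_DERIV_r[OF \<open>smooth_on2 \<Omega> u\<close> assms(2)]
  have "pd_t (\<lambda>w. fst w powr m * \<rho> w) (r, t) = r powr m * pd_t \<rho> (r, t)"
    using DERIV_imp_deriv[OF DERIV_cmult[OF \<rho>_t, of "r powr m"]] by (simp add: pd_t_def)
  moreover have "pd_r (\<lambda>w. fst w powr m * \<rho> w * u w) (r, t)
      = (m * r powr (m - 1) * \<rho> (r, t) + pd_r \<rho> (r, t) * r powr m) * u (r, t)
        + pd_r u (r, t) * (r powr m * \<rho> (r, t))"
    using DERIV_imp_deriv[OF DERIV_mult[OF DERIV_mult[OF has_real_derivative_powr[OF \<open>r > 0\<close>] \<rho>_r] u_r]]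
    by (simp add: pd_r_def)
  moreover have "r powr (m - 1) = r powr m / r"
    using \<open>r > 0\<close> by (simp add: powr_diff)
  ultimately have "r powr m * (pd_t \<rho> (r, t) + u (r, t) * pd_r \<rho> (r, t) + \<rho> (r, t) * pd_r u (r, t)
      + m * \<rho> (r, t) * u (r, t) / r)
      = pd_t (\<lambda>w. fst w powr m * \<rho> w) (r, t) + pd_r (\<lambda>w. fst w powr m * \<rho> w * u w) (r, t)"
    by (simp add: algebra_simps)
  then show ?thesis using mass \<open>r > 0\<close> by simp
qed

lemma euler_momentum_nonconservative:
  assumes "euler_solution m K 3 \<Omega> \<rho> u" and "(r, t) \<in> \<Omega>"
  shows "pd_t u (r, t) + u (r, t) * pd_r u (r, t) + 3 * K * \<rho> (r, t) * pd_r \<rho> (r, t) = 0"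
proof -
  have "r > 0" and "\<rho> (r, t) > 0" and "open \<Omega>" and "smooth_on2 \<Omega> \<rho>" and "smooth_on2 \<Omega> u"
    and "\<And>z. z \<in> \<Omega> \<Longrightarrow> \<rho> z > 0"
    and momentum: "pd_t (\<lambda>w. fst w powr m * \<rho> w * u w) (r, t)
      + pd_r (\<lambda>w. fst w powr m * \<rho> w * (u w)\<^sup>2) (r, t)
      + r powr m * pd_r (\<lambda>w. K * \<rho> w powr 3) (r, t) = 0"
    using assms unfolding euler_solution_def by force+
  note \<rho>_r = smooth_on2_DERIV_r[OF \<open>smooth_on2 \<Omega> \<rho>\<close> assms(2)]
    and \<rho>_t = smooth_on2_DERIV_t[OF \<open>smooth_on2 \<Omega> \<rho>\<close> assms(2)]
    and u_r = smooth_on2_DERIV_r[OF \<open>smooth_on2 \<Omega> u\<close> assms(2)]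
    and u_t = smooth_on2_DERIV_t[OF \<open>smooth_on2 \<Omega> u\<close> assms(2)]
  have flux_t: "pd_t (\<lambda>w. fst w powr m * \<rho> w * u w) (r, t)
      = r powr m * pd_t \<rho> (r, t) * u (r, t) + pd_t u (r, t) * (r powr m * \<rho> (r, t))"
    using DERIV_imp_deriv[OF DERIV_mult[OF DERIV_cmult[OF \<rho>_t, of "r powr m"] u_t]]
    by (simp add: pd_t_def)
  have flux_r: "pd_r (\<lambda>w. fst w powr m * \<rho> w * (u w)\<^sup>2) (r, t)
      = (m * r powr (m - 1) * \<rho> (r, t) + pd_r \<rho> (r, t) * r powr m) * (u (r, t))\<^sup>2
        + 2 * pd_r u (r, t) * u (r, t) * (r powr m * \<rho> (r, t))"
    using DERIV_imp_deriv[OF DERIV_mult[OF DERIV_mult[OF has_real_derivative_powr[OF \<open>r > 0\<close>] \<rho>_r]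
        DERIV_power[OF u_r, of 2]]]
    by (simp add: pd_r_def)
  have pressure_r: "pd_r (\<lambda>w. K * \<rho> w powr 3) (r, t)
      = K * (of_nat 3 * (pd_r \<rho> (r, t) * \<rho> (r, t) ^ (3 - Suc 0)))"
    by (rule pd_r_eq_on_slice[OF \<open>open \<Omega>\<close> assms(2) _ DERIV_cmult[OF DERIV_power[OF \<rho>_r]]])
      (simp add: less_imp_le \<open>\<And>z. z \<in> \<Omega> \<Longrightarrow> \<rho> z > 0\<close>)
  have r_powr: "r powr (m - 1) = r powr m / r"
    using \<open>r > 0\<close> by (simp add: powr_diff)
  have \<rho>_t_eq: "pd_t \<rho> (r, t) = - (u (r, t) * pd_r \<rho> (r, t) + \<rho> (r, t) * pd_r u (r, t)
      + m * \<rho> (r, t) * u (r, t) / r)"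
    using euler_mass_nonconservative[OF assms] by (simp add: algebra_simps)
  have "r powr m * \<rho> (r, t)
      * (pd_t u (r, t) + u (r, t) * pd_r u (r, t) + 3 * K * \<rho> (r, t) * pd_r \<rho> (r, t))
      = pd_t (\<lambda>w. fst w powr m * \<rho> w * u w) (r, t)
        + pd_r (\<lambda>w. fst w powr m * \<rho> w * (u w)\<^sup>2) (r, t)
        + r powr m * pd_r (\<lambda>w. K * \<rho> w powr 3) (r, t)"
    unfolding flux_t flux_r pressure_r r_powr \<rho>_t_eq using \<open>r > 0\<close> by (simp add: field_simps power2_eq_square)
  then show ?thesis using momentum \<open>r > 0\<close> \<open>\<rho> (r, t) > 0\<close> by simp
qed

lemma euler_mass_differentiated:
  assumes "euler_solution m K \<gamma> \<Omega> \<rho> u" and "(r, t) \<in> \<Omega>"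
  shows "pd_t (pd_r \<rho>) (r, t) = - (2 * pd_r u (r, t) * pd_r \<rho> (r, t) + u (r, t) * pd_r (pd_r \<rho>) (r, t)
           + \<rho> (r, t) * pd_r (pd_r u) (r, t) + m * (pd_r \<rho> (r, t) * u (r, t) + \<rho> (r, t) * pd_r u (r, t)) / r
           - m * \<rho> (r, t) * u (r, t) / r\<^sup>2)"
proof -
  have "r > 0" and "open \<Omega>" and "smooth_on2 \<Omega> \<rho>" and "smooth_on2 \<Omega> u"
    using assms unfolding euler_solution_def by force+
  note \<rho>_r = smooth_on2_DERIV_r[OF \<open>smooth_on2 \<Omega> \<rho>\<close> assms(2)]
    and u_r = smooth_on2_DERIV_r[OF \<open>smooth_on2 \<Omega> u\<close> assms(2)]
    and \<rho>_rr = smooth_on2_DERIV_r[OF smooth_on2_pd(1)[OF \<open>smooth_on2 \<Omega> \<rho>\<close> \<open>open \<Omega>\<close>] assms(2)]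
    and u_rr = smooth_on2_DERIV_r[OF smooth_on2_pd(1)[OF \<open>smooth_on2 \<Omega> u\<close> \<open>open \<Omega>\<close>] assms(2)]
  have "pd_t (pd_r \<rho>) (r, t) = pd_r (pd_t \<rho>) (r, t)"
    using smooth_on2_pd_commute[OF \<open>smooth_on2 \<Omega> \<rho>\<close> \<open>open \<Omega>\<close> assms(2)] .
  also have "\<dots> = - (2 * pd_r u (r, t) * pd_r \<rho> (r, t) + u (r, t) * pd_r (pd_r \<rho>) (r, t)
           + \<rho> (r, t) * pd_r (pd_r u) (r, t) + m * (pd_r \<rho> (r, t) * u (r, t) + \<rho> (r, t) * pd_r u (r, t)) / r
           - m * \<rho> (r, t) * u (r, t) / r\<^sup>2)"
  proof (rule pd_r_eq_on_slice[OF \<open>open \<Omega>\<close> assms(2)])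
    show "pd_t \<rho> (s, t) = - (u (s, t) * pd_r \<rho> (s, t) + \<rho> (s, t) * pd_r u (s, t) + m * \<rho> (s, t) * u (s, t) / s)"
      if "(s, t) \<in> \<Omega>" for s
      using euler_mass_nonconservative[OF assms(1) that] by (simp add: algebra_simps)
    show "((\<lambda>s. - (u (s, t) * pd_r \<rho> (s, t) + \<rho> (s, t) * pd_r u (s, t) + m * \<rho> (s, t) * u (s, t) / s))
        has_real_derivative - (2 * pd_r u (r, t) * pd_r \<rho> (r, t) + u (r, t) * pd_r (pd_r \<rho>) (r, t)
           + \<rho> (r, t) * pd_r (pd_r u) (r, t) + m * (pd_r \<rho> (r, t) * u (r, t) + \<rho> (r, t) * pd_r u (r, t)) / r
           - m * \<rho> (r, t) * u (r, t) / r\<^sup>2)) (at r)"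
      using \<open>r > 0\<close>
      by (intro DERIV_cong[OF DERIV_minus[OF DERIV_add[OF DERIV_add[OF DERIV_mult[OF u_r \<rho>_rr]
          DERIV_mult[OF \<rho>_r u_rr]] DERIV_divide[OF DERIV_mult[OF DERIV_cmult[OF \<rho>_r, of m] u_r] DERIV_ident]]]])
        (auto simp: field_simps power2_eq_square)
  qed
  finally show ?thesis .
qed

lemma euler_momentum_differentiated:
  assumes "euler_solution m K 3 \<Omega> \<rho> u" and "(r, t) \<in> \<Omega>"
  shows "pd_t (pd_r u) (r, t) = - (pd_r u (r, t) * pd_r u (r, t) + u (r, t) * pd_r (pd_r u) (r, t)
           + 3 * K * (pd_r \<rho> (r, t) * pd_r \<rho> (r, t) + \<rho> (r, t) * pd_r (pd_r \<rho>) (r, t)))"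
proof -
  have "open \<Omega>" and "smooth_on2 \<Omega> \<rho>" and "smooth_on2 \<Omega> u"
    using assms unfolding euler_solution_def by force+
  note \<rho>_r = smooth_on2_DERIV_r[OF \<open>smooth_on2 \<Omega> \<rho>\<close> assms(2)]
    and u_r = smooth_on2_DERIV_r[OF \<open>smooth_on2 \<Omega> u\<close> assms(2)]
    and \<rho>_rr = smooth_on2_DERIV_r[OF smooth_on2_pd(1)[OF \<open>smooth_on2 \<Omega> \<rho>\<close> \<open>open \<Omega>\<close>] assms(2)]
    and u_rr = smooth_on2_DERIV_r[OF smooth_on2_pd(1)[OF \<open>smooth_on2 \<Omega> u\<close> \<open>open \<Omega>\<close>] assms(2)]
  have "pd_t (pd_r u) (r, t) = pd_r (pd_t u) (r, t)"
    using smooth_on2_pd_commute[OF \<open>smooth_on2 \<Omega> u\<close> \<open>open \<Omega>\<close> assms(2)] .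
  also have "\<dots> = - (pd_r u (r, t) * pd_r u (r, t) + u (r, t) * pd_r (pd_r u) (r, t)
           + 3 * K * (pd_r \<rho> (r, t) * pd_r \<rho> (r, t) + \<rho> (r, t) * pd_r (pd_r \<rho>) (r, t)))"
  proof (rule pd_r_eq_on_slice[OF \<open>open \<Omega>\<close> assms(2)])
    show "pd_t u (s, t) = - (u (s, t) * pd_r u (s, t) + 3 * K * (\<rho> (s, t) * pd_r \<rho> (s, t)))"
      if "(s, t) \<in> \<Omega>" for s
      using euler_momentum_nonconservative[OF assms(1) that] by (simp add: algebra_simps)
    show "((\<lambda>s. - (u (s, t) * pd_r u (s, t) + 3 * K * (\<rho> (s, t) * pd_r \<rho> (s, t))))
        has_real_derivative - (pd_r u (r, t) * pd_r u (r, t) + u (r, t) * pd_r (pd_r u) (r, t)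
           + 3 * K * (pd_r \<rho> (r, t) * pd_r \<rho> (r, t) + \<rho> (r, t) * pd_r (pd_r \<rho>) (r, t)))) (at r)"
      by (intro DERIV_cong[OF DERIV_minus[OF DERIV_add[OF DERIV_mult[OF u_r u_rr]
          DERIV_cmult[OF DERIV_mult[OF \<rho>_r \<rho>_rr]]]]]) simp
  qed
  finally show ?thesis .
qed

section \<open>The gradient variables along characteristics\<close>

text \<open>For \<open>\<gamma> = 3\<close> the sound speed is \<open>h = c \<rho>\<close> with \<open>c = sqrt (3 K)\<close>, so \<open>\<alpha>\<close> and \<open>\<beta>\<close> are
  \<open>grad_var\<close> with \<open>c\<close> and \<open>-c\<close> respectively.\<close>

definition grad_var ::
  "real \<Rightarrow> real \<Rightarrow> (real \<times> real \<Rightarrow> real) \<Rightarrow> (real \<times> real \<Rightarrow> real) \<Rightarrow> real \<times> real \<Rightarrow> real" where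
  "grad_var m c \<rho> u z = pd_r u z + c * pd_r \<rho> z + m / fst z * (c * \<rho> z * u z / (u z + c * \<rho> z))"

lemma euler_hsp_eq:
  assumes "euler_solution m K 3 \<Omega> \<rho> u" and "z \<in> \<Omega>"
  shows "hsp K 3 \<rho> z = sqrt (K * 3) * \<rho> z"
proof -
  have "\<rho> z > 0" using assms unfolding euler_solution_def by blast
  then show ?thesis by (simp add: hsp_def)
qed

lemma euler_pd_r_hsp:
  assumes "euler_solution m K 3 \<Omega> \<rho> u" and "(r, t) \<in> \<Omega>"
  shows "pd_r (hsp K 3 \<rho>) (r, t) = sqrt (K * 3) * pd_r \<rho> (r, t)"
proof -
  have "open \<Omega>" and "smooth_on2 \<Omega> \<rho>"
    using assms(1) unfolding euler_solution_def by auto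
  show ?thesis
    by (rule pd_r_eq_on_slice[OF \<open>open \<Omega>\<close> assms(2) _
          DERIV_cmult[OF smooth_on2_DERIV_r[OF \<open>smooth_on2 \<Omega> \<rho>\<close> assms(2)]]])
      (use euler_hsp_eq[OF assms(1)] in simp)
qed

lemma euler_alpha_eq_grad_var:
  assumes "euler_solution m K 3 \<Omega> \<rho> u" and "(r, t) \<in> \<Omega>"
  shows "alpha m K 3 \<rho> u (r, t) = grad_var m (sqrt (K * 3)) \<rho> u (r, t)"
proof -
  have "2 / (3 - 1) = (1::real)" by simp
  then show ?thesis
    unfolding alpha_def grad_var_def c2_def euler_hsp_eq[OF assms] euler_pd_r_hsp[OF assms]
    by (simp only: mult_1)
qed

lemma euler_beta_eq_grad_var:
  assumes "euler_solution m K 3 \<Omega> \<rho> u" and "(r, t) \<in> \<Omega>"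
  shows "beta m K 3 \<rho> u (r, t) = grad_var m (- sqrt (K * 3)) \<rho> u (r, t)"
proof -
  have "2 / (3 - 1) = (1::real)" by simp
  then show ?thesis
    unfolding beta_def grad_var_def c1_def euler_hsp_eq[OF assms] euler_pd_r_hsp[OF assms]
    by (simp only: mult_1 mult_minus_left mult_minus_right add_uminus_conv_diff
        minus_divide_left[symmetric])
qed

text \<open>Here \<open>U, P\<close> are the values of \<open>u, \<rho>\<close> at a point with radius \<open>X\<close>, subscripts denote partial
  derivatives there, and \<open>DX, DU, \<dots>\<close> derivatives along the curve of speed \<open>U + c P\<close>. The
  left-hand side is written exactly as the product and quotient rules produce it.\<close>

lemma grad_var_char_identity:
  fixes X U P Ur Pr Urr Prr Ut Pt Urt Prt DX DU DP DUr DPr c m :: real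
  assumes "X \<noteq> 0" and "c \<noteq> 0" and "U + c * P \<noteq> 0" and "U - c * P \<noteq> 0"
    and grad_zero: "Ur + c * Pr + m / X * (c * P * U / (U + c * P)) = 0"
    and DX: "DX = U + c * P"
    and DP: "DP = Pr * DX + Pt" and DU: "DU = Ur * DX + Ut"
    and DPr: "DPr = Prr * DX + Prt" and DUr: "DUr = Urr * DX + Urt"
    and Pt: "Pt = - (U * Pr + P * Ur + m * P * U / X)"
    and Ut: "Ut = - (U * Ur + c * c * P * Pr)"
    and Prt: "Prt = - (2 * Ur * Pr + U * Prr + P * Urr + m * (Pr * U + P * Ur) / X - m * P * U / X\<^sup>2)"
    and Urt: "Urt = - (Ur * Ur + U * Urr + c * c * (Pr * Pr + P * Prr))"
  shows "DUr + c * DPr + ((0 * X - m * DX) / (X * X) * (c * P * U / (U + c * P)) +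
      ((c * DP * U + DU * (c * P)) * (U + c * P) - c * P * U * (DU + c * DP)) /
      ((U + c * P) * (U + c * P)) * (m / X))
    = m * (U - c * P)\<^sup>2 / (2 * X * (U + c * P))
      * (Ur + (- c) * Pr + m / X * ((- c) * P * U / (U + (- c) * P)))"
proof -
  define W where "W = U + c * P"
  define Z where "Z = U - c * P"
  have "W \<noteq> 0" and "Z \<noteq> 0" using assms(3,4) by (auto simp: W_def Z_def)
  have U: "U = (W + Z) / 2" and P: "P = (W - Z) / (2 * c)" and cP: "c * P = (W - Z) / 2"
    using \<open>c \<noteq> 0\<close> by (auto simp: W_def Z_def field_simps)
  have Ur: "Ur = - c * Pr - m / X * (c * P * U / W)"
    using grad_zero unfolding W_def by (simp add: algebra_simps)
  show ?thesis
    unfolding DUr DPr DP DU DX Pt Ut Prt Urt W_def[symmetric] Z_def[symmetric]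
    unfolding Ur mult_minus_left add_uminus_conv_diff Z_def[symmetric]
    unfolding cP U P
    using \<open>X \<noteq> 0\<close> \<open>c \<noteq> 0\<close> \<open>W \<noteq> 0\<close> \<open>Z \<noteq> 0\<close>
    by (simp add: field_simps) (simp add: algebra_simps power2_eq_square)
qed

lemma euler_grad_var_deriv_along_char:
  fixes x :: "real \<Rightarrow> real"
  assumes eu: "euler_solution m K 3 \<Omega> \<rho> u" and "c * c = 3 * K" and "c \<noteq> 0"
    and "(x ts, ts) \<in> \<Omega>"
    and "u (x ts, ts) + c * \<rho> (x ts, ts) \<noteq> 0" and "u (x ts, ts) - c * \<rho> (x ts, ts) \<noteq> 0"
    and x': "(x has_real_derivative u (x ts, ts) + c * \<rho> (x ts, ts)) (at ts)"
    and "grad_var m c \<rho> u (x ts, ts) = 0"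
  shows "((\<lambda>t. grad_var m c \<rho> u (x t, t)) has_real_derivative
      m * (u (x ts, ts) - c * \<rho> (x ts, ts))\<^sup>2 / (2 * x ts * (u (x ts, ts) + c * \<rho> (x ts, ts)))
        * grad_var m (- c) \<rho> u (x ts, ts)) (at ts)"
proof -
  have "open \<Omega>" and "smooth_on2 \<Omega> \<rho>" and "smooth_on2 \<Omega> u" and "x ts \<noteq> 0"
    using eu \<open>(x ts, ts) \<in> \<Omega>\<close> unfolding euler_solution_def by force+
  note along = has_partials_along_graph[OF smooth_on2_has_partials[OF _ \<open>(x ts, ts) \<in> \<Omega>\<close>] x']
  note u' = along[OF \<open>smooth_on2 \<Omega> u\<close>] and \<rho>' = along[OF \<open>smooth_on2 \<Omega> \<rho>\<close>]
    and u_r' = along[OF smooth_on2_pd(1)[OF \<open>smooth_on2 \<Omega> u\<close> \<open>open \<Omega>\<close>]]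
    and \<rho>_r' = along[OF smooth_on2_pd(1)[OF \<open>smooth_on2 \<Omega> \<rho>\<close> \<open>open \<Omega>\<close>]]
  note deriv = DERIV_add[OF DERIV_add[OF u_r' DERIV_cmult[OF \<rho>_r', of c]]
      DERIV_mult[OF DERIV_divide[OF DERIV_const[of m] x' \<open>x ts \<noteq> 0\<close>]
        DERIV_divide[OF DERIV_mult[OF DERIV_cmult[OF \<rho>', of c] u']
          DERIV_add[OF u' DERIV_cmult[OF \<rho>', of c]] \<open>u (x ts, ts) + c * \<rho> (x ts, ts) \<noteq> 0\<close>]]]
  note identity = grad_var_char_identity[OF \<open>x ts \<noteq> 0\<close> \<open>c \<noteq> 0\<close> assms(5,6)
      \<open>grad_var m c \<rho> u (x ts, ts) = 0\<close>[unfolded grad_var_def fst_conv] refl refl refl refl refl]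
  show ?thesis
    unfolding grad_var_def fst_conv
  proof (rule DERIV_cong[OF deriv identity])
    show "pd_t \<rho> (x ts, ts) = - (u (x ts, ts) * pd_r \<rho> (x ts, ts) + \<rho> (x ts, ts) * pd_r u (x ts, ts)
        + m * \<rho> (x ts, ts) * u (x ts, ts) / x ts)"
      using euler_mass_nonconservative[OF eu \<open>(x ts, ts) \<in> \<Omega>\<close>] by (simp add: algebra_simps)
    show "pd_t u (x ts, ts) = - (u (x ts, ts) * pd_r u (x ts, ts) + c * c * \<rho> (x ts, ts) * pd_r \<rho> (x ts, ts))"
      using euler_momentum_nonconservative[OF eu \<open>(x ts, ts) \<in> \<Omega>\<close>] \<open>c * c = 3 * K\<close>
      by (simp add: algebra_simps)
    show "pd_t (pd_r \<rho>) (x ts, ts) = - (2 * pd_r u (x ts, ts) * pd_r \<rho> (x ts, ts)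
        + u (x ts, ts) * pd_r (pd_r \<rho>) (x ts, ts) + \<rho> (x ts, ts) * pd_r (pd_r u) (x ts, ts)
        + m * (pd_r \<rho> (x ts, ts) * u (x ts, ts) + \<rho> (x ts, ts) * pd_r u (x ts, ts)) / x ts
        - m * \<rho> (x ts, ts) * u (x ts, ts) / (x ts)\<^sup>2)"
      by (rule euler_mass_differentiated[OF eu \<open>(x ts, ts) \<in> \<Omega>\<close>])
    show "pd_t (pd_r u) (x ts, ts) = - (pd_r u (x ts, ts) * pd_r u (x ts, ts)
        + u (x ts, ts) * pd_r (pd_r u) (x ts, ts)
        + c * c * (pd_r \<rho> (x ts, ts) * pd_r \<rho> (x ts, ts) + \<rho> (x ts, ts) * pd_r (pd_r \<rho>) (x ts, ts)))"
      using euler_momentum_differentiated[OF eu \<open>(x ts, ts) \<in> \<Omega>\<close>] \<open>c * c = 3 * K\<close> by simp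
  qed
qed

lemma DERIV_pos_not_changes_R_to_C:
  assumes "(g has_real_derivative l) (at ts)" and "l > 0"
  shows "\<not> changes_R_to_C g ts \<epsilon>"
proof
  assume change: "changes_R_to_C g ts \<epsilon>"
  obtain d where "d > 0" and increasing: "\<And>h. 0 < h \<Longrightarrow> h < d \<Longrightarrow> g ts < g (ts + h)"
    using DERIV_pos_inc_right[OF assms] by blast
  define h where "h = min d \<epsilon> / 2"
  have "0 < h" "h < d" "h < \<epsilon>"
    using \<open>d > 0\<close> change by (auto simp: h_def changes_R_to_C_def)
  then have "ts + h \<in> {ts<..<ts + \<epsilon>}" by simp
  then have "g (ts + h) < 0" using change unfolding changes_R_to_C_def by blast
  moreover have "g ts < g (ts + h)" using increasing \<open>0 < h\<close> \<open>h < d\<close> by blast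
  ultimately show False using change unfolding changes_R_to_C_def by simp
qed

lemma DERIV_neg_not_changes_C_to_R:
  assumes "(g has_real_derivative l) (at ts)" and "l < 0"
  shows "\<not> changes_C_to_R g ts \<epsilon>"
proof
  assume change: "changes_C_to_R g ts \<epsilon>"
  obtain d where "d > 0" and decreasing: "\<And>h. 0 < h \<Longrightarrow> h < d \<Longrightarrow> g ts > g (ts + h)"
    using DERIV_neg_dec_right[OF assms] by blast
  define h where "h = min d \<epsilon> / 2"
  have "0 < h" "h < d" "h < \<epsilon>"
    using \<open>d > 0\<close> change by (auto simp: h_def changes_C_to_R_def)
  then have "ts + h \<in> {ts<..<ts + \<epsilon>}" by simp
  then have "g (ts + h) > 0" using change unfolding changes_C_to_R_def by blast
  moreover have "g ts > g (ts + h)" using decreasing \<open>0 < h\<close> \<open>h < d\<close> by blast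
  ultimately show False using change unfolding changes_C_to_R_def by simp
qed

lemma char_curve_DERIV:
  assumes "char_curve \<Omega> v J r0 x" and "{ts - \<epsilon><..<ts + \<epsilon>} \<subseteq> J" and "\<epsilon> > 0"
  shows "(x has_real_derivative v (x ts, ts)) (at ts)"
proof -
  have "ts \<in> {ts - \<epsilon><..<ts + \<epsilon>}" using \<open>\<epsilon> > 0\<close> by simp
  then have "at ts within J = at ts"
    using at_within_open_subset[OF _ _ assms(2)] by simp
  moreover have "ts \<in> J" using assms(2) \<open>ts \<in> {ts - \<epsilon><..<ts + \<epsilon>}\<close> by blast
  ultimately show ?thesis using assms(1) unfolding char_curve_def by metis
qed

lemma euler_grad_var_deriv_at_zero_along_char:
  fixes x :: "real \<Rightarrow> real" and G H v :: "real \<times> real \<Rightarrow> real"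
  assumes eu: "euler_solution m K 3 \<Omega> \<rho> u" and "m > 0" and "c * c = 3 * K" and "c \<noteq> 0"
    and supersonic: "\<And>z. z \<in> \<Omega> \<Longrightarrow> 0 < u z - c * \<rho> z \<and> 0 < u z + c * \<rho> z"
    and speed: "\<And>z. z \<in> \<Omega> \<Longrightarrow> v z = u z + c * \<rho> z"
    and G: "\<And>z. z \<in> \<Omega> \<Longrightarrow> G z = grad_var m c \<rho> u z"
    and H: "\<And>z. z \<in> \<Omega> \<Longrightarrow> H z = grad_var m (- c) \<rho> u z"
    and curve: "char_curve \<Omega> v J r0 x" and "{ts - \<epsilon><..<ts + \<epsilon>} \<subseteq> J" and "\<epsilon> > 0"
    and "G (x ts, ts) = 0"
  obtains k where "k > 0" and "((\<lambda>t. G (x t, t)) has_real_derivative k * H (x ts, ts)) (at ts)"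
proof -
  define T where "T = {ts - \<epsilon><..<ts + \<epsilon>}"
  have "open T" and "ts \<in> T" using \<open>\<epsilon> > 0\<close> by (auto simp: T_def)
  have on_curve: "(x t, t) \<in> \<Omega>" if "t \<in> T" for t
    using curve that \<open>{ts - \<epsilon><..<ts + \<epsilon>} \<subseteq> J\<close> unfolding char_curve_def T_def by blast
  note x_ts = on_curve[OF \<open>ts \<in> T\<close>]
  have x': "(x has_real_derivative u (x ts, ts) + c * \<rho> (x ts, ts)) (at ts)"
    using char_curve_DERIV[OF curve \<open>{ts - \<epsilon><..<ts + \<epsilon>} \<subseteq> J\<close> \<open>\<epsilon> > 0\<close>] speed[OF x_ts] by simp
  define k where "k = m * (u (x ts, ts) - c * \<rho> (x ts, ts))\<^sup>2
    / (2 * x ts * (u (x ts, ts) + c * \<rho> (x ts, ts)))"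
  have "x ts > 0" using eu x_ts unfolding euler_solution_def by force
  then have "k > 0" using \<open>m > 0\<close> supersonic[OF x_ts] by (simp add: k_def)
  moreover have "((\<lambda>t. G (x t, t)) has_real_derivative k * H (x ts, ts)) (at ts)"
  proof (rule has_field_derivative_transform_within_open[OF _ \<open>open T\<close> \<open>ts \<in> T\<close>])
    show "((\<lambda>t. grad_var m c \<rho> u (x t, t)) has_real_derivative k * H (x ts, ts)) (at ts)"
      unfolding k_def H[OF x_ts]
      using euler_grad_var_deriv_along_char[OF eu \<open>c * c = 3 * K\<close> \<open>c \<noteq> 0\<close> x_ts _ _ x']
        supersonic[OF x_ts] G[OF x_ts] \<open>G (x ts, ts) = 0\<close>
      by simp
    show "grad_var m c \<rho> u (x t, t) = G (x t, t)" if "t \<in> T" for t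
      using G on_curve that by auto
  qed
  ultimately show ?thesis using that by blast
qed

lemma euler_grad_var_sign_change_along_char:
  fixes x :: "real \<Rightarrow> real" and G H v :: "real \<times> real \<Rightarrow> real"
  assumes eu: "euler_solution m K 3 \<Omega> \<rho> u" and "m > 0" and "c * c = 3 * K" and "c \<noteq> 0"
    and "\<And>z. z \<in> \<Omega> \<Longrightarrow> 0 < u z - c * \<rho> z \<and> 0 < u z + c * \<rho> z"
    and "\<And>z. z \<in> \<Omega> \<Longrightarrow> v z = u z + c * \<rho> z"
    and "\<And>z. z \<in> \<Omega> \<Longrightarrow> G z = grad_var m c \<rho> u z"
    and "\<And>z. z \<in> \<Omega> \<Longrightarrow> H z = grad_var m (- c) \<rho> u z"
    and "char_curve \<Omega> v J r0 x" and "{ts - \<epsilon><..<ts + \<epsilon>} \<subseteq> J"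
  shows "H (x ts, ts) > 0 \<Longrightarrow> \<not> changes_R_to_C (\<lambda>t. G (x t, t)) ts \<epsilon>"
    and "H (x ts, ts) < 0 \<Longrightarrow> \<not> changes_C_to_R (\<lambda>t. G (x t, t)) ts \<epsilon>"
proof -
  note derivative = euler_grad_var_deriv_at_zero_along_char[OF assms]
  show "\<not> changes_R_to_C (\<lambda>t. G (x t, t)) ts \<epsilon>" if "H (x ts, ts) > 0"
  proof
    assume change: "changes_R_to_C (\<lambda>t. G (x t, t)) ts \<epsilon>"
    then obtain k where "k > 0" and "((\<lambda>t. G (x t, t)) has_real_derivative k * H (x ts, ts)) (at ts)"
      using derivative unfolding changes_R_to_C_def by blast
    then show False using DERIV_pos_not_changes_R_to_C change \<open>H (x ts, ts) > 0\<close> by auto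
  qed
  show "\<not> changes_C_to_R (\<lambda>t. G (x t, t)) ts \<epsilon>" if "H (x ts, ts) < 0"
  proof
    assume change: "changes_C_to_R (\<lambda>t. G (x t, t)) ts \<epsilon>"
    then obtain k where "k > 0" and "((\<lambda>t. G (x t, t)) has_real_derivative k * H (x ts, ts)) (at ts)"
      using derivative unfolding changes_C_to_R_def by blast
    then show False
      using DERIV_neg_not_changes_C_to_R change \<open>H (x ts, ts) < 0\<close> mult_pos_neg by blast
  qed
qed

theorem mainTheorem2:
  fixes m K \<gamma> :: real and \<Omega> :: "(real \<times> real) set" and \<rho> u :: "real \<times> real \<Rightarrow> real"
  assumes "m \<in> {1, 2}" and "K > 0" and "\<gamma> = 3"
    and "euler_solution m K \<gamma> \<Omega> \<rho> u"
  shows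
    \<comment> \<open>(i) 1-wave R: the 2-wave cannot change from R to C\<close>
    "(\<forall>J r0 \<psi> ts \<epsilon>. char_curve \<Omega> (c2 K \<gamma> \<rho> u) J r0 \<psi> \<and> {ts - \<epsilon><..<ts + \<epsilon>} \<subseteq> J
        \<and> beta m K \<gamma> \<rho> u (\<psi> ts, ts) > 0
        \<longrightarrow> \<not> changes_R_to_C (\<lambda>t. alpha m K \<gamma> \<rho> u (\<psi> t, t)) ts \<epsilon>)
   \<and> \<comment> \<open>(i) 2-wave R: the 1-wave cannot change from R to C\<close>
    (\<forall>J r0 \<xi> ts \<epsilon>. char_curve \<Omega> (c1 K \<gamma> \<rho> u) J r0 \<xi> \<and> {ts - \<epsilon><..<ts + \<epsilon>} \<subseteq> J
        \<and> alpha m K \<gamma> \<rho> u (\<xi> ts, ts) > 0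
        \<longrightarrow> \<not> changes_R_to_C (\<lambda>t. beta m K \<gamma> \<rho> u (\<xi> t, t)) ts \<epsilon>)
   \<and> \<comment> \<open>(ii) 1-wave C: the 2-wave cannot change from C to R\<close>
    (\<forall>J r0 \<psi> ts \<epsilon>. char_curve \<Omega> (c2 K \<gamma> \<rho> u) J r0 \<psi> \<and> {ts - \<epsilon><..<ts + \<epsilon>} \<subseteq> J
        \<and> beta m K \<gamma> \<rho> u (\<psi> ts, ts) < 0
        \<longrightarrow> \<not> changes_C_to_R (\<lambda>t. alpha m K \<gamma> \<rho> u (\<psi> t, t)) ts \<epsilon>)
   \<and> \<comment> \<open>(ii) 2-wave C: the 1-wave cannot change from C to R\<close>
    (\<forall>J r0 \<xi> ts \<epsilon>. char_curve \<Omega> (c1 K \<gamma> \<rho> u) J r0 \<xi> \<and> {ts - \<epsilon><..<ts + \<epsilon>} \<subseteq> J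
        \<and> alpha m K \<gamma> \<rho> u (\<xi> ts, ts) < 0
        \<longrightarrow> \<not> changes_C_to_R (\<lambda>t. beta m K \<gamma> \<rho> u (\<xi> t, t)) ts \<epsilon>)"
proof -
  define c where "c = sqrt (K * 3)"
  have eu: "euler_solution m K 3 \<Omega> \<rho> u" using assms(3,4) by simp
  have "m > 0" using assms(1) by auto
  have "c * c = 3 * K" and "(- c) * (- c) = 3 * K" and "c \<noteq> 0" and "- c \<noteq> 0"
    using \<open>K > 0\<close> by (auto simp: c_def)
  have speeds: "c2 K 3 \<rho> u z = u z + c * \<rho> z" "c1 K 3 \<rho> u z = u z + (- c) * \<rho> z" if "z \<in> \<Omega>" for z
    using euler_hsp_eq[OF eu that] by (simp_all add: c1_def c2_def c_def)
  have supersonic: "0 < u z - c * \<rho> z \<and> 0 < u z + c * \<rho> z" if "z \<in> \<Omega>" for z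
    using eu that speeds[OF that] unfolding euler_solution_def by force
  have alpha: "alpha m K 3 \<rho> u z = grad_var m c \<rho> u z"
    and alpha': "alpha m K 3 \<rho> u z = grad_var m (- (- c)) \<rho> u z"
    and beta: "beta m K 3 \<rho> u z = grad_var m (- c) \<rho> u z" if "z \<in> \<Omega>" for z
    using euler_alpha_eq_grad_var[OF eu] euler_beta_eq_grad_var[OF eu] that
    by (metis c_def minus_minus surj_pair)+
  note wave2 = euler_grad_var_sign_change_along_char[OF eu \<open>m > 0\<close> \<open>c * c = 3 * K\<close> \<open>c \<noteq> 0\<close>
      supersonic speeds(1) alpha beta]
  note wave1 = euler_grad_var_sign_change_along_char[OF eu \<open>m > 0\<close> \<open>(- c) * (- c) = 3 * K\<close> \<open>- c \<noteq> 0\<close>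
      _ speeds(2) beta alpha']
  show ?thesis unfolding \<open>\<gamma> = 3\<close>
    using wave1 wave2 supersonic by auto
qed

end
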